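(* In the database model described in the context, let $0<\alpha\le1$, let $t_\alpha\ge0$ be the largest $t\ge0$ such that $P(LR(S)\ge t)\ge\alpha$, and let $\mathcal D_\alpha=\{i\in\{1,\dots,N\}: LR(P_i)\ge t_\alpha\}$. Then $t_\alpha$ exists, and, if $\pi_{\mathcal D}>0$, \[ P(R\in\mathcal D_\alpha\mid R\in\mathcal D)=P(LR(S)\ge t_\alpha)\ge\alpha, \] so that $P(R\in\mathcal D_\alpha)\ge\alpha\,P(R\in\mathcal D)$.
   Context: Let $E$ be a countable set and let $S$, $G$ be $E$-valued random variables such that for every $e\in E$, $P(S=e)>0$ implies $P(G=e)>0$. For $e\in E$ define the likelihood ratio $LR(e)=P(S=e)/P(G=e)$ if $P(G=e)>0$ and $LR(e)=0$ otherwise. Database model: fix $N\ge1$. Let $R$ be a random variable with values in $\{0,1,\dots,N\}$; we write $R\in\mathcal D$ for $R\in\{1,\dots,N\}$ and $R\notin\mathcal D$ for $R=0$. Put $\pi_i=P(R=i)$ for $1\le i\le N$ and $\pi_{\mathcal D}=\sum_{i=1}^N\pi_i$. There are $E$-valued random variables $P_1,\dots,P_N$ such that conditionally on $R=i$ with $1\le i\le N$, they are independent, $P_i$ has the distribution of $S$ and $P_j$ ($j\ne i$) has the distribution of $G$; and conditionally on $R=0$ they are independent, each with the distribution of $G$. *)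

theory Defs
  imports "HOL-Probability.Probability"
begin

text \<open>Likelihood ratio of e, where s and g are the distributions (pmfs) of S and G on the
  countable value type.\<close>
definition LR :: "'e pmf \<Rightarrow> 'e pmf \<Rightarrow> 'e \<Rightarrow> real" where
  "LR s g e = (if pmf g e > 0 then pmf s e / pmf g e else 0)"

end

theory Submission imports Defs begin

(* Write F(t) = P(LR(S) >= t).  F is non-increasing, F(0) = 1, F(t) -> 0 as
   t -> infinity, and F is left-continuous (the events {LR(S) >= t} decrease to {LR(S) >= T}
   as t increases to T).  Hence {t >= 0. F t >= alpha} is a non-empty bounded interval
   containing its supremum, which is the threshold t_alpha.
   For the database part, the joint law of (R, P_1, ..., P_N) is marginalised one
   coordinate at a time down to the single coordinate P_i, which gives
   P(R = i, P_i in B) = pi_i * P(S in B) for every set B.  Summing over i = 1..N yields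
   P(R in D_alpha) = F(t_alpha) * pi_D, from which the conditional probability and the
   lower bound alpha * pi_D follow. *)

lemma measure_UN_proportional_pmf:
  fixes X :: "'e::countable \<Rightarrow> 'a set" and p :: "'e pmf"
  assumes M: "prob_space M" and sets: "\<And>x. X x \<in> sets M"
    and disj: "disjoint_family X" and c: "c \<ge> 0"
    and meas: "\<And>x. measure M (X x) = c * pmf p x"
  shows "measure M (\<Union>x\<in>B. X x) = c * measure_pmf.prob p B"
proof -
  interpret prob_space M by fact
  have "emeasure M (\<Union>x\<in>B. X x) = (\<integral>\<^sup>+x. emeasure M (X x) \<partial>count_space B)"
    by (rule emeasure_UN_countable) (auto simp: sets disjoint_family_on_mono[OF _ disj])
  also have "\<dots> = (\<integral>\<^sup>+x. ennreal c * (ennreal (pmf p x) * indicator B x) \<partial>count_space UNIV)"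
    by (simp add: nn_integral_count_space_indicator emeasure_eq_measure meas ennreal_mult c
        mult.assoc)
  also have "\<dots> = ennreal c * (\<integral>\<^sup>+x. ennreal (pmf p x) * indicator B x \<partial>count_space UNIV)"
    by (rule nn_integral_cmult) simp
  also have "(\<integral>\<^sup>+x. ennreal (pmf p x) * indicator B x \<partial>count_space UNIV)
      = emeasure (measure_pmf p) B"
    by (simp add: nn_integral_measure_pmf[symmetric])
  finally have "emeasure M (\<Union>x\<in>B. X x) = ennreal (c * measure_pmf.prob p B)"
    by (simp add: measure_pmf.emeasure_eq_measure ennreal_mult c)
  then show ?thesis
    by (simp add: emeasure_eq_measure c)
qed

lemma sets_cylinder_event:
  fixes P :: "nat \<Rightarrow> 'a \<Rightarrow> 'e::countable"
  assumes R_meas: "R \<in> measurable M (count_space UNIV)"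
    and P_meas: "\<And>j. j \<in> {1..N} \<Longrightarrow> P j \<in> measurable M (count_space UNIV)"
    and J: "J \<subseteq> {1..N}"
  shows "{\<omega> \<in> space M. R \<omega> = i \<and> (\<forall>j\<in>J. P j \<omega> = e j)} \<in> sets M"
proof -
  have "{\<omega> \<in> space M. P j \<omega> = e j} = P j -` {e j} \<inter> space M"
    and "{\<omega> \<in> space M. R \<omega> = i} = R -` {i} \<inter> space M" for j by auto
  moreover have "P j -` {e j} \<inter> space M \<in> sets M" if "j \<in> J" for j
    using that J by (intro measurable_sets[OF P_meas]) auto
  moreover have "R -` {i} \<inter> space M \<in> sets M"
    by (intro measurable_sets[OF R_meas]) auto
  moreover have "finite J" using J finite_subset by blast
  ultimately show ?thesis
    by (intro sets.sets_Collect_conj sets.sets_Collect_finite_All) auto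
qed

text \<open>Proof by summing out the
  coordinates of K one at a time.\<close>
lemma measure_cylinder_marginal:
  fixes P :: "nat \<Rightarrow> 'a \<Rightarrow> 'e::countable" and q :: "nat \<Rightarrow> 'e pmf"
  assumes M: "prob_space M"
    and R_meas: "R \<in> measurable M (count_space UNIV)"
    and P_meas: "\<And>j. j \<in> {1..N} \<Longrightarrow> P j \<in> measurable M (count_space UNIV)"
    and joint: "\<And>e :: nat \<Rightarrow> 'e.
        measure M {\<omega> \<in> space M. R \<omega> = i \<and> (\<forall>j\<in>{1..N}. P j \<omega> = e j)}
        = measure M {\<omega> \<in> space M. R \<omega> = i} * (\<Prod>j\<in>{1..N}. pmf (q j) (e j))"
    and K: "K \<subseteq> {1..N}"
  shows "measure M {\<omega> \<in> space M. R \<omega> = i \<and> (\<forall>j\<in>{1..N} - K. P j \<omega> = e j)}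
        = measure M {\<omega> \<in> space M. R \<omega> = i} * (\<Prod>j\<in>{1..N} - K. pmf (q j) (e j))"
proof -
  define c where "c = measure M {\<omega> \<in> space M. R \<omega> = i}"
  have "finite K" using K finite_subset by blast
  then show ?thesis
    using K unfolding c_def[symmetric]
  proof (induction K arbitrary: e rule: finite_subset_induct')
    case empty
    then show ?case using joint by (simp add: c_def)
  next
    case (insert k K)
    let ?J = "{1..N} - K" and ?J' = "{1..N} - insert k K"
    have k: "k \<in> ?J" and J': "?J' = ?J - {k}" using insert by auto
    let ?X = "\<lambda>x. {\<omega> \<in> space M. R \<omega> = i \<and> (\<forall>j\<in>?J. P j \<omega> = (e(k := x)) j)}"
    have split: "{\<omega> \<in> space M. R \<omega> = i \<and> (\<forall>j\<in>?J'. P j \<omega> = e j)} = (\<Union>x\<in>UNIV. ?X x)"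
      using k by (auto simp: J')
    have X: "measure M (?X x) = c * (\<Prod>j\<in>?J'. pmf (q j) (e j)) * pmf (q k) x" for x
    proof -
      have "measure M (?X x) = c * (\<Prod>j\<in>?J. pmf (q j) ((e(k := x)) j))"
        by (rule insert.IH)
      also have "(\<Prod>j\<in>?J. pmf (q j) ((e(k := x)) j))
          = pmf (q k) x * (\<Prod>j\<in>?J'. pmf (q j) ((e(k := x)) j))"
        using prod.remove[OF _ k, of "\<lambda>j. pmf (q j) ((e(k := x)) j)"] J' by simp
      also have "(\<Prod>j\<in>?J'. pmf (q j) ((e(k := x)) j)) = (\<Prod>j\<in>?J'. pmf (q j) (e j))"
        by (rule prod.cong) auto
      finally show ?thesis by (simp only: mult_ac)
    qed
    have "measure M (\<Union>x\<in>UNIV. ?X x)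
        = c * (\<Prod>j\<in>?J'. pmf (q j) (e j)) * measure_pmf.prob (q k) UNIV"
    proof (rule measure_UN_proportional_pmf[OF M _ _ _ X])
      show "?X x \<in> sets M" for x
        by (rule sets_cylinder_event[OF R_meas P_meas]) auto
      show "disjoint_family ?X"
        using k by (auto simp: disjoint_family_on_def)
      show "0 \<le> c * (\<Prod>j\<in>?J'. pmf (q j) (e j))"
        unfolding c_def by (simp add: prod_nonneg)
    qed
    then show ?case
      unfolding split by (simp add: measure_pmf.prob_space)
  qed
qed

lemma measure_identified_profile:
  fixes P :: "nat \<Rightarrow> 'a \<Rightarrow> 'e::countable" and q :: "nat \<Rightarrow> 'e pmf"
  assumes M: "prob_space M"
    and R_meas: "R \<in> measurable M (count_space UNIV)"
    and P_meas: "\<And>j. j \<in> {1..N} \<Longrightarrow> P j \<in> measurable M (count_space UNIV)"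
    and joint: "\<And>e :: nat \<Rightarrow> 'e.
        measure M {\<omega> \<in> space M. R \<omega> = i \<and> (\<forall>j\<in>{1..N}. P j \<omega> = e j)}
        = measure M {\<omega> \<in> space M. R \<omega> = i} * (\<Prod>j\<in>{1..N}. pmf (q j) (e j))"
    and i: "i \<in> {1..N}"
  shows "measure M {\<omega> \<in> space M. R \<omega> = i \<and> P i \<omega> \<in> B}
        = measure M {\<omega> \<in> space M. R \<omega> = i} * measure_pmf.prob (q i) B"
proof -
  let ?X = "\<lambda>x. {\<omega> \<in> space M. R \<omega> = i \<and> P i \<omega> = x}"
  have sub: "{1..N} - ({1..N} - {i}) = {i}" using i by auto
  have "measure M (\<Union>x\<in>B. ?X x) = measure M {\<omega> \<in> space M. R \<omega> = i} * measure_pmf.prob (q i) B"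
  proof (rule measure_UN_proportional_pmf[OF M])
    show "?X x \<in> sets M" for x
      using sets_cylinder_event[OF R_meas P_meas, where J="{i}" and e="\<lambda>_. x"] i by simp
    show "measure M (?X x) = measure M {\<omega> \<in> space M. R \<omega> = i} * pmf (q i) x" for x
      using measure_cylinder_marginal[OF M R_meas P_meas joint, of "{1..N} - {i}" "\<lambda>_. x"]
      unfolding sub by simp
  qed (auto simp: disjoint_family_on_def)
  moreover have "(\<Union>x\<in>B. ?X x) = {\<omega> \<in> space M. R \<omega> = i \<and> P i \<omega> \<in> B}"
    by auto
  ultimately show ?thesis by simp
qed

lemma measure_source_profile_in:
  fixes s g :: "'e::countable pmf" and P :: "nat \<Rightarrow> 'a \<Rightarrow> 'e" and R :: "'a \<Rightarrow> nat"
  assumes M: "prob_space M"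
    and R_meas: "R \<in> measurable M (count_space UNIV)"
    and P_meas: "\<And>j. j \<in> {1..N} \<Longrightarrow> P j \<in> measurable M (count_space UNIV)"
    and joint: "\<And>i (e :: nat \<Rightarrow> 'e). i \<in> {1..N} \<Longrightarrow>
        measure M {\<omega> \<in> space M. R \<omega> = i \<and> (\<forall>j\<in>{1..N}. P j \<omega> = e j)}
        = measure M {\<omega> \<in> space M. R \<omega> = i}
          * (\<Prod>j\<in>{1..N}. pmf (if j = i then s else g) (e j))"
  shows "measure M {\<omega> \<in> space M. R \<omega> \<in> {i \<in> {1..N}. P i \<omega> \<in> B}}
        = measure_pmf.prob s B * measure M {\<omega> \<in> space M. R \<omega> \<in> {1..N}}"
proof -
  interpret prob_space M by fact
  let ?A = "\<lambda>i. {\<omega> \<in> space M. R \<omega> = i \<and> P i \<omega> \<in> B}"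
  let ?R = "\<lambda>i. {\<omega> \<in> space M. R \<omega> = i}"
  have sets_R: "?R i \<in> sets M" for i
    using sets_cylinder_event[OF R_meas P_meas, where J="{}"] by simp
  have sets_A: "?A i \<in> sets M" if "i \<in> {1..N}" for i
  proof -
    have "?A i = (\<Union>x\<in>B. {\<omega> \<in> space M. R \<omega> = i \<and> (\<forall>j\<in>{i}. P j \<omega> = x)})" by auto
    also have "\<dots> \<in> sets M"
      using sets_cylinder_event[OF R_meas P_meas, where J="{i}"] that
      by (intro sets.countable_UN') auto
    finally show ?thesis .
  qed
  have "measure M {\<omega> \<in> space M. R \<omega> \<in> {i \<in> {1..N}. P i \<omega> \<in> B}} = measure M (\<Union>i\<in>{1..N}. ?A i)"
    by (rule arg_cong[where f="measure M"]) auto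
  also have "\<dots> = (\<Sum>i\<in>{1..N}. measure M (?A i))"
    by (rule measure_finite_Union) (auto simp: sets_A disjoint_family_on_def)
  also have "\<dots> = (\<Sum>i\<in>{1..N}. measure M (?R i) * measure_pmf.prob s B)"
    using measure_identified_profile[OF M R_meas P_meas joint] by (intro sum.cong) auto
  also have "\<dots> = measure_pmf.prob s B * measure M (\<Union>i\<in>{1..N}. ?R i)"
    by (subst measure_finite_Union)
      (auto simp: sets_R disjoint_family_on_def sum_distrib_left mult.commute)
  also have "(\<Union>i\<in>{1..N}. ?R i) = {\<omega> \<in> space M. R \<omega> \<in> {1..N}}"
    by auto
  finally show ?thesis .
qed

lemma tail_prob_vanishes:
  fixes p :: "'e pmf" and f :: "'e \<Rightarrow> real"
  shows "(\<lambda>n. measure_pmf.prob p {e. real n \<le> f e}) \<longlonglongrightarrow> 0"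
proof -
  have "(\<lambda>n. measure_pmf.prob p {e. real n \<le> f e})
      \<longlonglongrightarrow> measure_pmf.prob p (\<Inter>n. {e. real n \<le> f e})"
    by (rule measure_pmf.finite_Lim_measure_decseq) (auto simp: decseq_def)
  moreover have "(\<Inter>n. {e. real n \<le> f e}) = {}"
  proof -
    have "\<not> (\<forall>n. real n \<le> f e)" for e
      using reals_Archimedean2[of "f e"] by (auto simp: not_le)
    then show ?thesis by auto
  qed
  ultimately show ?thesis by simp
qed

lemma tail_prob_left_continuous:
  fixes p :: "'e pmf" and f :: "'e \<Rightarrow> real"
  shows "(\<lambda>n. measure_pmf.prob p {e. T - 1 / real (Suc n) \<le> f e})
      \<longlonglongrightarrow> measure_pmf.prob p {e. T \<le> f e}"
proof -
  have step_mono: "T - 1 / real (Suc m) \<le> T - 1 / real (Suc n)" if "m \<le> n" for m n :: nat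
    using that by (intro diff_left_mono divide_left_mono) auto
  have "(\<lambda>n. measure_pmf.prob p {e. T - 1 / real (Suc n) \<le> f e})
      \<longlonglongrightarrow> measure_pmf.prob p (\<Inter>n. {e. T - 1 / real (Suc n) \<le> f e})"
  proof (rule measure_pmf.finite_Lim_measure_decseq)
    show "decseq (\<lambda>n. {e. T - 1 / real (Suc n) \<le> f e})"
      unfolding decseq_def using step_mono by (blast intro: order_trans)
  qed auto
  moreover have "(\<Inter>n. {e. T - 1 / real (Suc n) \<le> f e}) = {e. T \<le> f e}"
  proof (intro set_eqI iffI)
    fix e assume e: "e \<in> (\<Inter>n. {e. T - 1 / real (Suc n) \<le> f e})"
    show "e \<in> {e. T \<le> f e}"
    proof (rule ccontr)
      assume "e \<notin> {e. T \<le> f e}"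
      then obtain n where "inverse (real (Suc n)) < T - f e"
        using reals_Archimedean[of "T - f e"] by auto
      moreover have "T - 1 / real (Suc n) \<le> f e" using e by blast
      ultimately show False by (simp add: divide_inverse del: of_nat_Suc)
    qed
  next
    fix e assume "e \<in> {e. T \<le> f e}"
    then have "T - 1 / real (Suc n) \<le> f e" for n
      using divide_nonneg_nonneg[of 1 "real (Suc n)"] by (simp only: mem_Collect_eq) linarith
    then show "e \<in> (\<Inter>n. {e. T - 1 / real (Suc n) \<le> f e})" by blast
  qed
  ultimately show ?thesis by simp
qed

text \<open>Existence of the largest threshold t >= 0 with P(f(X) >= t) >= alpha, for a non-negative
  score f and 0 < alpha <= 1: it is the supremum of all such t.\<close>
lemma largest_threshold_exists:
  fixes p :: "'e pmf" and f :: "'e \<Rightarrow> real" and \<alpha> :: real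
  assumes f_nonneg: "\<And>e. f e \<ge> 0" and alpha: "0 < \<alpha>" "\<alpha> \<le> 1"
  shows "\<exists>T. T \<ge> 0 \<and> measure_pmf.prob p {e. f e \<ge> T} \<ge> \<alpha>
             \<and> (\<forall>t\<ge>0. measure_pmf.prob p {e. f e \<ge> t} \<ge> \<alpha> \<longrightarrow> t \<le> T)"
proof -
  define F where "F t = measure_pmf.prob p {e. f e \<ge> t}" for t
  define S where "S = {t. 0 \<le> t \<and> \<alpha> \<le> F t}"
  define T where "T = Sup S"
  have F_antimono: "F t \<le> F u" if "u \<le> t" for u t
    unfolding F_def using that by (intro measure_pmf.finite_measure_mono) auto
  have "0 \<in> S"
    using f_nonneg alpha by (simp add: S_def F_def measure_pmf.prob_space)
  obtain n where n: "F (real n) < \<alpha>"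
    using order_tendstoD(2)[OF tail_prob_vanishes[of p f] alpha(1)]
    by (auto simp: F_def eventually_sequentially)
  have "t \<le> real n" if "t \<in> S" for t
    using that n F_antimono[of "real n" t] by (force simp: S_def)
  then have bdd: "bdd_above S" by (auto simp: bdd_above_def)
  then have upper: "t \<le> T" if "t \<in> S" for t
    unfolding T_def using that by (intro cSup_upper)
  have approx: "\<alpha> \<le> F (T - 1 / real (Suc n))" for n
  proof -
    obtain t where "t \<in> S" "T - 1 / real (Suc n) < t"
      using \<open>0 \<in> S\<close> less_cSupE[of "T - 1 / real (Suc n)" S] unfolding T_def by auto
    then show ?thesis using F_antimono[of "T - 1 / real (Suc n)" t] by (auto simp: S_def)
  qed
  have "\<alpha> \<le> F T"
    using tail_prob_left_continuous[of p T f] approx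
    by (intro tendsto_lowerbound[where F=sequentially]) (auto simp: F_def)
  then show ?thesis
    using upper \<open>0 \<in> S\<close> unfolding F_def S_def by (intro exI[of _ T]) auto
qed

theorem mainTheorem5:
  fixes s g :: "'e::countable pmf"
    and M :: "'a measure"
    and N :: nat
    and R :: "'a \<Rightarrow> nat"
    and P :: "nat \<Rightarrow> 'a \<Rightarrow> 'e"
    and \<alpha> :: real
  assumes supp: "\<And>e. pmf s e > 0 \<Longrightarrow> pmf g e > 0"
    and N: "N \<ge> 1"
    and M: "prob_space M"
    and R_meas: "R \<in> measurable M (count_space UNIV)"
    and R_range: "\<And>\<omega>. \<omega> \<in> space M \<Longrightarrow> R \<omega> \<le> N"
    and P_meas: "\<And>j. j \<in> {1..N} \<Longrightarrow> P j \<in> measurable M (count_space UNIV)"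
    and joint: "\<And>i (e :: nat \<Rightarrow> 'e). i \<le> N \<Longrightarrow>
        measure M {\<omega> \<in> space M. R \<omega> = i \<and> (\<forall>j\<in>{1..N}. P j \<omega> = e j)}
        = measure M {\<omega> \<in> space M. R \<omega> = i}
          * (\<Prod>j\<in>{1..N}. pmf (if j = i then s else g) (e j))"
    and alpha: "0 < \<alpha>" "\<alpha> \<le> 1"
  shows "\<exists>t\<^sub>\<alpha>::real.
           (t\<^sub>\<alpha> \<ge> 0 \<and> measure_pmf.prob s {e. LR s g e \<ge> t\<^sub>\<alpha>} \<ge> \<alpha>
             \<and> (\<forall>t\<ge>0. measure_pmf.prob s {e. LR s g e \<ge> t} \<ge> \<alpha> \<longrightarrow> t \<le> t\<^sub>\<alpha>))
         \<and> (measure M {\<omega> \<in> space M. R \<omega> \<in> {1..N}} > 0 \<longrightarrow>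
              cond_prob M (\<lambda>\<omega>. R \<omega> \<in> {i \<in> {1..N}. LR s g (P i \<omega>) \<ge> t\<^sub>\<alpha>})
                          (\<lambda>\<omega>. R \<omega> \<in> {1..N})
                = measure_pmf.prob s {e. LR s g e \<ge> t\<^sub>\<alpha>}
            \<and> measure_pmf.prob s {e. LR s g e \<ge> t\<^sub>\<alpha>} \<ge> \<alpha>
            \<and> measure M {\<omega> \<in> space M. R \<omega> \<in> {i \<in> {1..N}. LR s g (P i \<omega>) \<ge> t\<^sub>\<alpha>}}
                \<ge> \<alpha> * measure M {\<omega> \<in> space M. R \<omega> \<in> {1..N}})"
proof -
  have LR_nonneg: "\<And>e. LR s g e \<ge> 0" by (simp add: LR_def)
  obtain T where T: "T \<ge> 0" "measure_pmf.prob s {e. LR s g e \<ge> T} \<ge> \<alpha>"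
    and T_max: "\<forall>t\<ge>0. measure_pmf.prob s {e. LR s g e \<ge> t} \<ge> \<alpha> \<longrightarrow> t \<le> T"
    using largest_threshold_exists[where p=s and f="LR s g", OF LR_nonneg alpha] by auto
  let ?F = "measure_pmf.prob s {e. LR s g e \<ge> T}"
  let ?D = "{\<omega> \<in> space M. R \<omega> \<in> {1..N}}"
  have selected: "measure M {\<omega> \<in> space M. R \<omega> \<in> {i \<in> {1..N}. LR s g (P i \<omega>) \<ge> T}}
      = ?F * measure M ?D"
  proof -
    have "\<And>i (e :: nat \<Rightarrow> 'e). i \<in> {1..N} \<Longrightarrow>
        measure M {\<omega> \<in> space M. R \<omega> = i \<and> (\<forall>j\<in>{1..N}. P j \<omega> = e j)}
        = measure M {\<omega> \<in> space M. R \<omega> = i}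
          * (\<Prod>j\<in>{1..N}. pmf (if j = i then s else g) (e j))"
      using joint by auto
    from measure_source_profile_in[OF M R_meas P_meas this, of "{e. LR s g e \<ge> T}"]
    show ?thesis by simp
  qed
  have "{\<omega> \<in> space M. R \<omega> \<in> {i \<in> {1..N}. LR s g (P i \<omega>) \<ge> T} \<and> R \<omega> \<in> {1..N}}
      = {\<omega> \<in> space M. R \<omega> \<in> {i \<in> {1..N}. LR s g (P i \<omega>) \<ge> T}}" by auto
  then have "measure M ?D > 0 \<Longrightarrow>
      cond_prob M (\<lambda>\<omega>. R \<omega> \<in> {i \<in> {1..N}. LR s g (P i \<omega>) \<ge> T}) (\<lambda>\<omega>. R \<omega> \<in> {1..N}) = ?F"
    unfolding cond_prob_def using selected by simp
  moreover have "measure M {\<omega> \<in> space M. R \<omega> \<in> {i \<in> {1..N}. LR s g (P i \<omega>) \<ge> T}}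
      \<ge> \<alpha> * measure M ?D"
    unfolding selected using T by (intro mult_right_mono) auto
  ultimately show ?thesis
    using T T_max by (intro exI[of _ T] conjI impI)
qed

end
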